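(* Let $P$ be a finite point set and $C$ a convex body in the plane. Any algorithm that classifies the points of $P$ in relation to $C$ (i.e. decides for each point of $P$ whether it lies in $C$), using only a separation oracle for $C$, must perform at least $\operatorname{price}(P,C)$ separation oracle queries.
   Context: Separation oracle: given a query point $q\in\mathbb{R}^2$, it either reports $q\in C$, or returns a line separating $q$ from $C$. The outer fence $F_{\mathrm{out}}$ of $P$ is a closed convex polygon with the minimum number of vertices such that $C\subseteq F_{\mathrm{out}}$ and $C\cap P=F_{\mathrm{out}}\cap P$. The inner fence $F_{\mathrm{in}}$ is a closed convex polygon with the minimum number of vertices such that $F_{\mathrm{in}}\subseteq C$ and $C\cap P=F_{\mathrm{in}}\cap P$. The separation price is $\operatorname{price}(P,C)=|V(F_{\mathrm{in}})|+|V(F_{\mathrm{out}})|$, where $|V(F)|$ is the number of vertices of a polygon $F$. *)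

theory Defs
  imports "HOL-Analysis.Analysis"
begin

type_synonym pt = "real ^ 2"

definition convex_body :: "pt set \<Rightarrow> bool" where
  "convex_body C \<longleftrightarrow> compact C \<and> convex C \<and> interior C \<noteq> {}"

text \<open>Closed convex polygon: intersection of finitely many closed half-planes
  (library notion polyhedron); its vertices are its extreme points.\<close>
definition vertices :: "pt set \<Rightarrow> pt set" where
  "vertices F = {x. x extreme_point_of F}"

definition outer_fence_size :: "pt set \<Rightarrow> pt set \<Rightarrow> nat" where
  "outer_fence_size P C = (LEAST n. \<exists>F. polyhedron F \<and> C \<subseteq> F \<and> C \<inter> P = F \<inter> P
                                          \<and> card (vertices F) = n)"

definition inner_fence_size :: "pt set \<Rightarrow> pt set \<Rightarrow> nat" where
  "inner_fence_size P C = (LEAST n. \<exists>F. polyhedron F \<and> F \<subseteq> C \<and> C \<inter> P = F \<inter> P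
                                          \<and> card (vertices F) = n)"

definition price :: "pt set \<Rightarrow> pt set \<Rightarrow> nat" where
  "price P C = inner_fence_size P C + outer_fence_size P C"

text \<open>Answer of a separation oracle: the point is inside, or a line
  {x. a \<bullet> x = b} (a \<noteq> 0) with C in {x. a \<bullet> x \<le> b} and a \<bullet> q > b.\<close>
datatype answer = Inside | Separate pt real

definition sep_oracle :: "pt set \<Rightarrow> (pt \<Rightarrow> answer) \<Rightarrow> bool" where
  "sep_oracle C orc \<longleftrightarrow>
     (\<forall>q. (q \<in> C \<longrightarrow> orc q = Inside) \<and>
          (q \<notin> C \<longrightarrow> (\<exists>a b. orc q = Separate a b \<and> a \<noteq> 0 \<and>
                               C \<subseteq> {x. a \<bullet> x \<le> b} \<and> a \<bullet> q > b)))"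

text \<open>A deterministic adaptive algorithm that accesses C only through the oracle:
  a (well-founded) decision tree. Done S outputs the set S of points declared inside.\<close>
datatype alg = Done "pt set" | Ask pt "answer \<Rightarrow> alg"

primrec result :: "(pt \<Rightarrow> answer) \<Rightarrow> alg \<Rightarrow> pt set" where
  "result orc (Done S) = S"
| "result orc (Ask q k) = result orc (k (orc q))"

primrec num_queries :: "(pt \<Rightarrow> answer) \<Rightarrow> alg \<Rightarrow> nat" where
  "num_queries orc (Done S) = 0"
| "num_queries orc (Ask q k) = Suc (num_queries orc (k (orc q)))"

definition classifies :: "pt set \<Rightarrow> alg \<Rightarrow> bool" where
  "classifies P A \<longleftrightarrow>
     (\<forall>C orc. convex_body C \<and> sep_oracle C orc \<longrightarrow> (\<forall>p\<in>P. p \<in> result orc A \<longleftrightarrow> p \<in> C))"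

end

theory Submission
  imports Defs
begin

text \<open>An adversary argument. The points answered \<open>Inside\<close> span a polygon inside \<open>C\<close> whose
  vertices are among them; the half-planes of the separating answers cut out a polygon containing
  \<open>C\<close> with at most as many vertices as half-planes, since every vertex lies on two bounding lines
  and every line carries at most two vertices. If either polygon disagreed with \<open>C\<close> on \<open>P\<close>,
  cutting \<open>C\<close> down, respectively enlarging it, at a point of \<open>P\<close> would give a convex body for
  which all answers the algorithm received remain valid, yet which is classified differently.\<close>

lemma card_active_constraints_at_extreme_point:
  fixes a :: "'i \<Rightarrow> 'a::euclidean_space" and b :: "'i \<Rightarrow> real"
  assumes "finite I" and v: "v extreme_point_of {x. \<forall>i\<in>I. a i \<bullet> x \<le> b i}"
  shows "DIM('a) \<le> card {i\<in>I. a i \<bullet> v = b i}"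
proof (rule ccontr)
  define F where "F = {x. \<forall>i\<in>I. a i \<bullet> x \<le> b i}"
  define T where "T = {i\<in>I. a i \<bullet> v = b i}"
  have "finite T" using \<open>finite I\<close> by (simp add: T_def)
  assume "\<not> DIM('a) \<le> card {i\<in>I. a i \<bullet> v = b i}"
  moreover have "dim (a ` T) \<le> card T"
    using dim_le_card'[of "a ` T"] card_image_le[of T a] \<open>finite T\<close> by simp
  ultimately have "dim (a ` T) < DIM('a)" by (simp add: T_def)
  then obtain w where "w \<noteq> 0" and w: "\<And>y. y \<in> span (a ` T) \<Longrightarrow> orthogonal w y"
    using orthogonal_to_subspace_exists by blast
  have "v \<in> F" using v by (simp add: F_def extreme_point_of_def)
  define U where "U = (\<Inter>i\<in>I - T. {x. a i \<bullet> x < b i})"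
  have "open U" using \<open>finite I\<close> by (auto simp: U_def open_halfspace_lt)
  moreover have "v \<in> U" using \<open>v \<in> F\<close> by (auto simp: U_def F_def T_def order.order_iff_strict)
  ultimately obtain r where "r > 0" and r: "ball v r \<subseteq> U"
    using open_contains_ball by blast
  have in_F: "x \<in> F" if "x \<in> U" and "\<And>i. i \<in> T \<Longrightarrow> a i \<bullet> x = b i" for x
    unfolding F_def
  proof (intro CollectI ballI)
    fix i assume "i \<in> I"
    show "a i \<bullet> x \<le> b i"
    proof (cases "i \<in> T")
      case False
      then show ?thesis using \<open>x \<in> U\<close> \<open>i \<in> I\<close> by (auto simp: U_def less_imp_le)
    qed (simp add: that(2))
  qed
  define u where "u = (r / (2 * norm w)) *\<^sub>R w"
  have "u \<noteq> 0" using \<open>r > 0\<close> \<open>w \<noteq> 0\<close> by (simp add: u_def)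
  have "norm u < r" using \<open>r > 0\<close> \<open>w \<noteq> 0\<close> by (simp add: u_def)
  then have "v + u \<in> U" "v - u \<in> U" using r by (auto simp: dist_norm subset_iff)
  moreover have "a i \<bullet> u = 0" if "i \<in> T" for i
    using w[of "a i"] that by (auto simp: u_def orthogonal_def inner_commute span_base)
  ultimately have "v + u \<in> F" "v - u \<in> F"
    by (auto intro!: in_F simp: inner_add_right inner_diff_right T_def)
  moreover have "v \<in> open_segment (v - u) (v + u)"
  proof -
    have "midpoint (v - u) (v + u) = v"
      by (simp add: midpoint_def algebra_simps flip: scaleR_add_left)
    moreover have "v - u \<noteq> v + u"
      using \<open>u \<noteq> 0\<close> by (simp add: algebra_simps flip: scaleR_2)
    ultimately show ?thesis by (metis midpoint_in_open_segment)
  qed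
  ultimately show False using v by (simp add: F_def extreme_point_of_def)
qed

lemma card_collinear_extreme_points_le_2:
  fixes S :: "'a::euclidean_space set"
  assumes "collinear S" and ext: "\<And>x. x \<in> S \<Longrightarrow> x extreme_point_of F"
  shows "card S \<le> 2"
proof (rule ccontr)
  assume "\<not> card S \<le> 2"
  then obtain x y z where xyz: "x \<in> S" "y \<in> S" "z \<in> S" "x \<noteq> y" "y \<noteq> z" "x \<noteq> z"
    by (auto simp: numeral_eq_Suc card_le_Suc_iff not_le Suc_le_eq[symmetric])
  then have "collinear {x, y, z}" using assms(1) by (auto intro: collinear_subset)
  then have "between (y, z) x \<or> between (z, x) y \<or> between (x, y) z"
    by (simp add: collinear_between_cases)
  then show False
    using ext xyz unfolding extreme_point_of_def between_mem_segment open_segment_def by blast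
qed

lemma collinear_line_in_plane:
  fixes a :: pt
  assumes "a \<noteq> 0"
  shows "collinear {x. a \<bullet> x = c}"
  using assms by (simp add: collinear_aff_dim)

lemma card_vertices_polygon_le:
  fixes a :: "'i \<Rightarrow> pt" and b :: "'i \<Rightarrow> real"
  assumes "finite I" and a0: "\<And>i. i \<in> I \<Longrightarrow> a i \<noteq> 0"
  shows "card (vertices {x. \<forall>i\<in>I. a i \<bullet> x \<le> b i}) \<le> card I"
proof -
  define F where "F = {x. \<forall>i\<in>I. a i \<bullet> x \<le> b i}"
  have "card V \<le> card I" if "finite V" "V \<subseteq> vertices F" for V
  proof -
    have "2 * card V = (\<Sum>v\<in>V. 2)" by simp
    also have "\<dots> \<le> (\<Sum>v\<in>V. card {i\<in>I. a i \<bullet> v = b i})"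
      using that card_active_constraints_at_extreme_point[OF \<open>finite I\<close>, of _ a b]
      by (intro sum_mono) (auto simp: vertices_def F_def)
    also have "\<dots> = (\<Sum>i\<in>I. card {v\<in>V. a i \<bullet> v = b i})"
      using sum.swap_restrict[OF \<open>finite V\<close> \<open>finite I\<close>, of "\<lambda>_ _. 1::nat"] by simp
    also have "\<dots> \<le> (\<Sum>i\<in>I. 2)"
    proof (rule sum_mono)
      fix i assume "i \<in> I"
      have "collinear {v\<in>V. a i \<bullet> v = b i}"
        using collinear_line_in_plane[OF a0[OF \<open>i \<in> I\<close>], of "b i"] by (rule collinear_subset) auto
      then show "card {v\<in>V. a i \<bullet> v = b i} \<le> 2"
        by (rule card_collinear_extreme_points_le_2) (use that in \<open>auto simp: vertices_def\<close>)
    qed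
    finally show ?thesis by simp
  qed
  then show ?thesis
    by (cases "finite (vertices F)") (auto simp: F_def)
qed

primrec queries :: "(pt \<Rightarrow> answer) \<Rightarrow> alg \<Rightarrow> pt list" where
  "queries orc (Done S) = []"
| "queries orc (Ask q k) = q # queries orc (k (orc q))"

lemma length_queries: "length (queries orc A) = num_queries orc A"
  by (induction A) auto

lemma result_cong_queries:
  "(\<And>q. q \<in> set (queries orc A) \<Longrightarrow> orc' q = orc q) \<Longrightarrow> result orc' A = result orc A"
  by (induction A) auto

definition valid_answer :: "pt set \<Rightarrow> pt \<Rightarrow> answer \<Rightarrow> bool" where
  "valid_answer C q ans \<longleftrightarrow> (q \<in> C \<longrightarrow> ans = Inside) \<and>
     (q \<notin> C \<longrightarrow> (\<exists>a b. ans = Separate a b \<and> a \<noteq> 0 \<and> C \<subseteq> {x. a \<bullet> x \<le> b} \<and> a \<bullet> q > b))"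

lemma valid_answer_Inside [simp]: "valid_answer C q Inside \<longleftrightarrow> q \<in> C"
  by (simp add: valid_answer_def)

lemma valid_answer_Separate [simp]:
  "valid_answer C q (Separate a b) \<longleftrightarrow> a \<noteq> 0 \<and> C \<subseteq> {x. a \<bullet> x \<le> b} \<and> a \<bullet> q > b"
  by (auto simp: valid_answer_def)

lemma sep_oracle_iff_valid_answer: "sep_oracle C orc \<longleftrightarrow> (\<forall>q. valid_answer C q (orc q))"
  by (simp add: sep_oracle_def valid_answer_def)

lemma sep_oracle_valid_answer: "sep_oracle C orc \<Longrightarrow> valid_answer C q (orc q)"
  by (simp add: sep_oracle_iff_valid_answer)

lemma sep_oracle_Inside_iff:
  assumes "sep_oracle C orc"
  shows "orc q = Inside \<longleftrightarrow> q \<in> C"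
  using sep_oracle_valid_answer[OF assms, of q] by (cases "orc q") auto

lemma valid_answer_exists:
  assumes "convex C" "closed C" "C \<noteq> {}"
  shows "\<exists>ans. valid_answer C q ans"
proof (cases "q \<in> C")
  case False
  then obtain a b where ab: "a \<bullet> q < b" "\<forall>x\<in>C. a \<bullet> x > b"
    using separating_hyperplane_closed_point[OF assms(1,2)] by blast
  then have "a \<noteq> 0" using assms(3) by auto
  then have "valid_answer C q (Separate (-a) (-b))"
    using ab by (auto simp: less_imp_le)
  then show ?thesis by blast
qed (metis valid_answer_Inside)

lemma classifies_agree_if_answers_valid:
  assumes "classifies P A" and "sep_oracle C orc" and "convex_body C" and "convex_body C'"
    and valid: "\<And>q. q \<in> set (queries orc A) \<Longrightarrow> valid_answer C' q (orc q)"
  shows "C' \<inter> P = C \<inter> P"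
proof -
  define orc' where
    "orc' q = (if valid_answer C' q (orc q) then orc q else (SOME ans. valid_answer C' q ans))" for q
  have "C' \<noteq> {}" using \<open>convex_body C'\<close> interior_subset[of C'] by (auto simp: convex_body_def)
  then have "sep_oracle C' orc'"
    using valid_answer_exists[of C'] someI_ex[of "valid_answer C' _"] \<open>convex_body C'\<close>
    by (auto simp: sep_oracle_iff_valid_answer orc'_def convex_body_def compact_imp_closed)
  moreover have "result orc' A = result orc A"
    by (rule result_cong_queries) (simp add: orc'_def valid)
  ultimately show ?thesis
    using assms(1-4) by (auto simp: classifies_def)
qed

lemma compact_convex_body_between:
  fixes C S :: "'a::euclidean_space set"
  assumes "compact C" "convex C" "interior C \<noteq> {}"
    and "compact S" "convex S" "S \<subseteq> C" "p \<notin> S"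
  obtains C' where "compact C'" "convex C'" "interior C' \<noteq> {}" "S \<subseteq> C'" "C' \<subseteq> C" "p \<notin> C'"
proof -
  obtain S' where S': "compact S'" "convex S'" "S' \<noteq> {}" "S \<subseteq> S'" "S' \<subseteq> C" "p \<notin> S'"
  proof (cases "S = {}")
    case True
    have "interior C \<noteq> {p}" using not_open_singleton[of p] by (metis open_interior)
    then obtain c where "c \<in> interior C" "c \<noteq> p" using \<open>interior C \<noteq> {}\<close> by blast
    then show ?thesis using that[of "{c}"] True interior_subset[of C] by auto
  qed (use that assms in blast)
  obtain a b where ab: "a \<bullet> p < b" "\<forall>x\<in>S'. a \<bullet> x > b"
    using separating_hyperplane_closed_point[OF S'(2) compact_imp_closed[OF S'(1)] S'(6)] by blast
  define C' where "C' = C \<inter> {x. b \<le> a \<bullet> x}"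
  \<comment> \<open>\<open>C'\<close> has interior: a point of \<open>S'\<close> beyond the line is a limit of interior points of \<open>C\<close>.\<close>
  obtain s where "s \<in> S'" using S'(3) by blast
  then have "s \<in> {x. b < a \<bullet> x} \<inter> closure (interior C)"
    using ab S'(5) convex_closure_interior[OF assms(2,3)] closure_subset by fastforce
  then obtain y where "y \<in> interior C" "b < a \<bullet> y"
    using open_Int_closure_eq_empty[OF open_halfspace_gt] by blast
  moreover have "interior C \<inter> {x. b < a \<bullet> x} \<subseteq> interior C'"
    by (rule interior_maximal) (auto simp: C'_def open_halfspace_gt dest: interior_subset[THEN subsetD])
  ultimately have "interior C' \<noteq> {}" by blast
  moreover have "compact C'" "convex C'"
    using assms(1,2) by (auto simp: C'_def compact_Int_closed closed_halfspace_ge convex_Int convex_halfspace_ge)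
  ultimately show ?thesis
    using that[of C'] ab S' by (force simp: C'_def less_imp_le)
qed

lemma inner_fence_size_le_inside_queries:
  assumes "classifies P A" and "sep_oracle C orc" and "convex_body C"
  shows "inner_fence_size P C \<le> card {q \<in> set (queries orc A). orc q = Inside}"
proof -
  define Q where "Q = {q \<in> set (queries orc A). orc q = Inside}"
  have "finite Q" by (simp add: Q_def)
  have "Q \<subseteq> C" using sep_oracle_Inside_iff[OF \<open>sep_oracle C orc\<close>] by (auto simp: Q_def)
  then have hull_C: "convex hull Q \<subseteq> C"
    using \<open>convex_body C\<close> by (simp add: convex_body_def hull_minimal)
  have "C \<inter> P = convex hull Q \<inter> P"
  proof (rule ccontr)
    assume "C \<inter> P \<noteq> convex hull Q \<inter> P"
    then obtain p where p: "p \<in> C" "p \<in> P" "p \<notin> convex hull Q" using hull_C by blast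
    have "compact C" "convex C" "interior C \<noteq> {}"
      using \<open>convex_body C\<close> by (auto simp: convex_body_def)
    then obtain C' where
      "compact C'" "convex C'" "interior C' \<noteq> {}" "convex hull Q \<subseteq> C'" "C' \<subseteq> C" "p \<notin> C'"
      by (rule compact_convex_body_between)
         (use \<open>finite Q\<close> hull_C p(3) in \<open>auto simp: compact_convex_hull finite_imp_compact\<close>)
    then have C': "convex_body C'" "convex hull Q \<subseteq> C'" "C' \<subseteq> C" "p \<notin> C'"
      by (auto simp: convex_body_def)
    have "valid_answer C' q (orc q)" if "q \<in> set (queries orc A)" for q
    proof (cases "orc q")
      case Inside
      then show ?thesis using that hull_subset[of Q convex] C'(2) by (auto simp: Q_def)
    next
      case Separate
      then show ?thesis using sep_oracle_valid_answer[OF \<open>sep_oracle C orc\<close>, of q] C'(3) by auto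
    qed
    then have "C' \<inter> P = C \<inter> P"
      using classifies_agree_if_answers_valid assms C'(1) by blast
    then show False using p C'(4) by blast
  qed
  then have "inner_fence_size P C \<le> card (vertices (convex hull Q))"
    unfolding inner_fence_size_def
    using hull_C polyhedron_convex_hull[OF \<open>finite Q\<close>] by (intro Least_le) blast
  also have "\<dots> \<le> card Q"
    using \<open>finite Q\<close> by (intro card_mono) (auto simp: vertices_def dest: extreme_point_of_convex_hull)
  finally show ?thesis by (simp add: Q_def)
qed

lemma outer_fence_size_le_separating_queries:
  assumes "classifies P A" and "sep_oracle C orc" and "convex_body C"
  shows "outer_fence_size P C \<le> card {q \<in> set (queries orc A). orc q \<noteq> Inside}"
proof -
  define Q where "Q = {q \<in> set (queries orc A). orc q \<noteq> Inside}"
  define a where "a q = (case orc q of Separate a b \<Rightarrow> a | Inside \<Rightarrow> 0)" for q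
  define b where "b q = (case orc q of Separate a b \<Rightarrow> b | Inside \<Rightarrow> 0)" for q
  have "finite Q" by (simp add: Q_def)
  have Q_sep: "orc q = Separate (a q) (b q)" if "q \<in> Q" for q
    using that by (cases "orc q") (auto simp: Q_def a_def b_def)
  have Q_valid: "a q \<noteq> 0 \<and> C \<subseteq> {x. a q \<bullet> x \<le> b q} \<and> a q \<bullet> q > b q" if "q \<in> Q" for q
    using sep_oracle_valid_answer[OF \<open>sep_oracle C orc\<close>, of q] Q_sep[OF that] by simp
  define F where "F = {x. \<forall>q\<in>Q. a q \<bullet> x \<le> b q}"
  have "polyhedron F"
  proof -
    have "F = (\<Inter>q\<in>Q. {x. a q \<bullet> x \<le> b q})" by (auto simp: F_def)
    then show ?thesis
      using \<open>finite Q\<close> by (auto intro: polyhedron_Inter polyhedron_halfspace_le)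
  qed
  have C_F: "C \<subseteq> F" using Q_valid by (auto simp: F_def)
  have "C \<inter> P = F \<inter> P"
  proof (rule ccontr)
    assume "C \<inter> P \<noteq> F \<inter> P"
    then obtain p where p: "p \<in> F" "p \<in> P" "p \<notin> C" using C_F by blast
    define C' where "C' = convex hull (insert p C)"
    have "C \<subseteq> C'" "p \<in> C'" using hull_subset[of "insert p C" convex] by (auto simp: C'_def)
    have "C' \<subseteq> F"
      unfolding C'_def using C_F p(1) polyhedron_imp_convex[OF \<open>polyhedron F\<close>]
      by (intro hull_minimal) auto
    have "convex_body C'"
      using \<open>convex_body C\<close> interior_mono[OF \<open>C \<subseteq> C'\<close>]
      by (auto simp: convex_body_def C'_def compact_convex_hull)
    moreover have "valid_answer C' q (orc q)" if "q \<in> set (queries orc A)" for q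
    proof (cases "orc q = Inside")
      case True
      moreover have "q \<in> C" using True sep_oracle_Inside_iff[OF \<open>sep_oracle C orc\<close>] by blast
      ultimately show ?thesis using \<open>C \<subseteq> C'\<close> by auto
    next
      case False
      then have "q \<in> Q" using that by (simp add: Q_def)
      then show ?thesis using Q_sep Q_valid \<open>C' \<subseteq> F\<close> by (auto simp: F_def)
    qed
    ultimately have "C' \<inter> P = C \<inter> P"
      using classifies_agree_if_answers_valid assms by blast
    then show False using p \<open>p \<in> C'\<close> by blast
  qed
  then have "outer_fence_size P C \<le> card (vertices F)"
    unfolding outer_fence_size_def using C_F \<open>polyhedron F\<close> by (intro Least_le) blast
  also have "\<dots> \<le> card Q"
    unfolding F_def using \<open>finite Q\<close> Q_valid by (intro card_vertices_polygon_le) auto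
  finally show ?thesis by (simp add: Q_def)
qed

theorem lemma3p1:
  fixes P C :: "pt set" and A :: alg and orc :: "pt \<Rightarrow> answer"
  assumes "finite P" and "convex_body C"
    and "classifies P A"
    and "sep_oracle C orc"
  shows "price P C \<le> num_queries orc A"
proof -
  let ?Q = "set (queries orc A)"
  have "price P C \<le> card {q \<in> ?Q. orc q = Inside} + card {q \<in> ?Q. orc q \<noteq> Inside}"
    unfolding price_def
    using inner_fence_size_le_inside_queries[OF assms(3,4,2)]
      outer_fence_size_le_separating_queries[OF assms(3,4,2)] by linarith
  also have "\<dots> = card ({q \<in> ?Q. orc q = Inside} \<union> {q \<in> ?Q. orc q \<noteq> Inside})"
    by (rule card_Un_disjoint[symmetric]) auto
  also have "\<dots> \<le> length (queries orc A)"
    by (rule order_trans[OF card_mono card_length]) auto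
  also have "\<dots> = num_queries orc A"
    by (rule length_queries)
  finally show ?thesis .
qed

end
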